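(* Let $\mathcal{F}:\mathcal{T}^Y\to\mathcal{T}^Z$ be a cover between trees of spheres, let $T''$ be a nonempty, open and connected subset of $T^Z$, and let $T'$ be a connected component of $F^{-1}(T'')$. Then the map $\overline{\mathcal{F}}:\overline{T'}\to\overline{T''}$ defined by $\overline{F}:=F|_{\overline{T'}}:\overline{T'}\to\overline{T''}$ and $\overline{f}_v:=f_v$ for every internal vertex $v$ of $\overline{T'}$ is a cover between trees of spheres, where $\overline{T'}$ (resp. $\overline{T''}$) is regarded as a tree of spheres marked by its set of leaves, with the spheres $\mathcal{S}_v$ and attaching maps $i_v$ of $\mathcal{T}^Y$ (resp. $\mathcal{T}^Z$) at its internal vertices.
   Context: Trees are finite connected graphs without cycles (vertex set $V$, edges $2$-element subsets of $V$, $E_v$ the set of edges containing $v$), regarded as the set $V\sqcup E$ with the topology whose closed sets are the sub-graphs (subsets containing both endpoints of each of their edges); $\overline{A}$ denotes closure. Leaves are vertices of valence $1$, the others internal vertices ($IV$). For $T''$ and $T'$ as in the claim, $\overline{T'}$ is a sub-tree of $T^Y$ whose internal vertices are exactly the internal vertices of $T^Y$ lying in $T'$, each having the same set of incident edges as in $T^Y$ (similarly for $\overline{T''}$ in $T^Z$), so the attaching maps $i_v$ make sense. A tree of spheres $\mathcal{T}^X$ marked by a finite set $X$ ($\ge3$ elements) consists of a tree $T^X$ whose leaf set is $X$ and, for each internal vertex $v$, a topological $2$-sphere $\mathcal{S}_v$ and an injection $i_v:E_v\to\mathcal{S}_v$; $X_v:=i_v(E_v)$. A cover $\mathcal{F}:\mathcal{T}^Y\to\mathcal{T}^Z$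 consists of a map $F:T^Y\to T^Z$ sending vertices to vertices and each edge $\{v,w\}$ to the edge $\{F(v),F(w)\}$, with $F(Y)\subseteq Z$, $F(IV^Y)\subseteq IV^Z$ (leaves to leaves, internal vertices to internal vertices), and for each $v\in IV^Y$, $w=F(v)$, a topological branched covering $f_v:\mathcal{S}_v\to\mathcal{S}_w$ such that $f_v:\mathcal{S}_v\setminus Y_v\to\mathcal{S}_w\setminus Z_w$ is a covering map, $f_v\circ i_v=i_w\circ F$ on $E_v$, and for an edge $e=\{v_1,v_2\}$ between internal vertices $\deg_{i_{v_1}(e)}f_{v_1}=\deg_{i_{v_2}(e)}f_{v_2}$. *)

theory Defs
  imports "HOL-Analysis.Analysis"
begin

definition edges_at :: "'v set set \<Rightarrow> 'v \<Rightarrow> 'v set set" where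
  "edges_at E v = {e \<in> E. v \<in> e}"

definition is_graph :: "'v set \<Rightarrow> 'v set set \<Rightarrow> bool" where
  "is_graph V E \<longleftrightarrow> (\<forall>e\<in>E. \<exists>a b. a \<noteq> b \<and> a \<in> V \<and> b \<in> V \<and> e = {a, b})"

definition graph_connected :: "'v set \<Rightarrow> 'v set set \<Rightarrow> bool" where
  "graph_connected V E \<longleftrightarrow>
     (\<forall>a\<in>V. \<forall>b\<in>V. (\<lambda>x y. {x, y} \<in> E)\<^sup>*\<^sup>* a b)"

definition is_cycle :: "'v set set \<Rightarrow> 'v list \<Rightarrow> bool" where
  "is_cycle E vs \<longleftrightarrow> length vs \<ge> 3 \<and> distinct vs \<and>
     (\<forall>k. Suc k < length vs \<longrightarrow> {vs ! k, vs ! Suc k} \<in> E) \<and> {last vs, hd vs} \<in> E"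

definition is_tree :: "'v set \<Rightarrow> 'v set set \<Rightarrow> bool" where
  "is_tree V E \<longleftrightarrow> finite V \<and> V \<noteq> {} \<and> is_graph V E \<and> graph_connected V E \<and>
     \<not> (\<exists>vs. set vs \<subseteq> V \<and> is_cycle E vs)"

definition leaves :: "'v set \<Rightarrow> 'v set set \<Rightarrow> 'v set" where
  "leaves V E = {v \<in> V. card (edges_at E v) = 1}"

definition internal_vertices :: "'v set \<Rightarrow> 'v set set \<Rightarrow> 'v set" where
  "internal_vertices V E = {v \<in> V. card (edges_at E v) \<noteq> 1}"

text \<open>Closed sets are the sub-graphs; equivalently open sets are the sets which contain,
  together with any vertex, every edge incident to it.\<close>

definition tree_points :: "'v set \<Rightarrow> 'v set set \<Rightarrow> ('v + 'v set) set" where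
  "tree_points V E = Inl ` V \<union> Inr ` E"

definition tree_open :: "'v set \<Rightarrow> 'v set set \<Rightarrow> ('v + 'v set) set \<Rightarrow> bool" where
  "tree_open V E U \<longleftrightarrow> U \<subseteq> tree_points V E \<and>
     (\<forall>v e. Inl v \<in> U \<longrightarrow> e \<in> E \<longrightarrow> v \<in> e \<longrightarrow> Inr e \<in> U)"

lemma istopology_tree_open: "istopology (tree_open V E)"
  unfolding istopology_def tree_open_def by blast

definition tree_top :: "'v set \<Rightarrow> 'v set set \<Rightarrow> ('v + 'v set) topology" where
  "tree_top V E = topology (tree_open V E)"

lemma openin_tree_top: "openin (tree_top V E) U \<longleftrightarrow> tree_open V E U"
  unfolding tree_top_def by (simp add: topology_inverse'[OF istopology_tree_open[of V E]])

definition sub_vertices :: "('v + 'v set) set \<Rightarrow> 'v set" where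
  "sub_vertices A = {v. Inl v \<in> A}"

definition sub_edges :: "('v + 'v set) set \<Rightarrow> 'v set set" where
  "sub_edges A = {e. Inr e \<in> A}"

definition tree_map :: "('v \<Rightarrow> 'w) \<Rightarrow> ('v + 'v set) \<Rightarrow> ('w + 'w set)" where
  "tree_map F p = (case p of Inl v \<Rightarrow> Inl (F v) | Inr e \<Rightarrow> Inr (F ` e))"

definition branched_local ::
  "('a::topological_space \<Rightarrow> 'b::topological_space) \<Rightarrow> 'a set \<Rightarrow> 'b set \<Rightarrow> 'a \<Rightarrow> nat \<Rightarrow> bool" where
  "branched_local f S T x d \<longleftrightarrow> d \<ge> 1 \<and>
     (\<exists>U V \<phi> \<phi>' \<psi> \<psi>'. openin (top_of_set S) U \<and> x \<in> U \<and> openin (top_of_set T) V \<and>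
        f ` U \<subseteq> V \<and>
        homeomorphism U (ball (0::complex) 1) \<phi> \<phi>' \<and> \<phi> x = 0 \<and>
        homeomorphism V (ball (0::complex) 1) \<psi> \<psi>' \<and> \<psi> (f x) = 0 \<and>
        (\<forall>u\<in>U. \<psi> (f u) = (\<phi> u) ^ d))"

definition branched_covering ::
  "('a::topological_space \<Rightarrow> 'b::topological_space) \<Rightarrow> 'a set \<Rightarrow> 'b set \<Rightarrow> bool" where
  "branched_covering f S T \<longleftrightarrow> continuous_on S f \<and> f ` S = T \<and>
     (\<forall>x\<in>S. \<exists>d. branched_local f S T x d)"

definition local_deg ::
  "('a::topological_space \<Rightarrow> 'b::topological_space) \<Rightarrow> 'a set \<Rightarrow> 'b set \<Rightarrow> 'a \<Rightarrow> nat" where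
  "local_deg f S T x = (THE d. branched_local f S T x d)"

text \<open>Tree of spheres marked by its leaf set, without the cardinality requirement.
  \<open>S v\<close> is the sphere at v, \<open>i v\<close> the attaching map on \<open>E_v\<close>.\<close>
definition tree_of_spheres_data ::
  "'v set \<Rightarrow> 'v set set \<Rightarrow> ('v \<Rightarrow> 'a::topological_space set) \<Rightarrow> ('v \<Rightarrow> 'v set \<Rightarrow> 'a) \<Rightarrow> bool" where
  "tree_of_spheres_data V E S i \<longleftrightarrow> is_tree V E \<and>
     (\<forall>v\<in>internal_vertices V E.
        S v homeomorphic sphere (0::real^3) 1 \<and>
        inj_on (i v) (edges_at E v) \<and> i v ` edges_at E v \<subseteq> S v)"

definition tree_of_spheres ::
  "'v set \<Rightarrow> 'v set set \<Rightarrow> ('v \<Rightarrow> 'a::topological_space set) \<Rightarrow> ('v \<Rightarrow> 'v set \<Rightarrow> 'a) \<Rightarrow> bool" where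
  "tree_of_spheres V E S i \<longleftrightarrow> tree_of_spheres_data V E S i \<and> card (leaves V E) \<ge> 3"

definition marked_points :: "'v set set \<Rightarrow> ('v \<Rightarrow> 'v set \<Rightarrow> 'a) \<Rightarrow> 'v \<Rightarrow> 'a set" where
  "marked_points E i v = i v ` edges_at E v"

definition tos_cover ::
  "'v set \<Rightarrow> 'v set set \<Rightarrow> ('v \<Rightarrow> 'a::topological_space set) \<Rightarrow> ('v \<Rightarrow> 'v set \<Rightarrow> 'a) \<Rightarrow>
   'w set \<Rightarrow> 'w set set \<Rightarrow> ('w \<Rightarrow> 'b::topological_space set) \<Rightarrow> ('w \<Rightarrow> 'w set \<Rightarrow> 'b) \<Rightarrow>
   ('v \<Rightarrow> 'w) \<Rightarrow> ('v \<Rightarrow> 'a \<Rightarrow> 'b) \<Rightarrow> bool" where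
  "tos_cover VY EY SY iY VZ EZ SZ iZ F f \<longleftrightarrow>
     F ` VY \<subseteq> VZ \<and>
     (\<forall>v w. {v, w} \<in> EY \<longrightarrow> {F v, F w} \<in> EZ) \<and>
     F ` leaves VY EY \<subseteq> leaves VZ EZ \<and>
     F ` internal_vertices VY EY \<subseteq> internal_vertices VZ EZ \<and>
     (\<forall>v\<in>internal_vertices VY EY.
        branched_covering (f v) (SY v) (SZ (F v)) \<and>
        covering_space (SY v - marked_points EY iY v) (f v) (SZ (F v) - marked_points EZ iZ (F v)) \<and>
        (\<forall>e\<in>edges_at EY v. f v (iY v e) = iZ (F v) (F ` e))) \<and>
     (\<forall>v1 v2. {v1, v2} \<in> EY \<longrightarrow> v1 \<in> internal_vertices VY EY \<longrightarrow> v2 \<in> internal_vertices VY EY \<longrightarrow>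
        local_deg (f v1) (SY v1) (SZ (F v1)) (iY v1 {v1, v2}) =
        local_deg (f v2) (SY v2) (SZ (F v2)) (iY v2 {v1, v2}))"

end

theory Submission
  imports Defs "HOL-Library.Transitive_Closure_Table"
begin

(* The open sets of V \<sqcup> E are the sets containing, with each vertex, all edges at it; so the
  closure of a set A only adds the endpoints of the edges of A. If A is open and connected, a
  vertex of the closure outside A lies on a single edge of A: the other ends of two such edges
  are joined by a path through A avoiding the vertex (connectedness of A), which would close up
  a cycle. Hence the closure is a subtree whose internal vertices are the internal vertices of
  the tree lying in A, each with all its edges.
  The component T' of the open set F\<^sup>-\<^sup>1(T'') is again open, and its boundary vertices
  are mapped out of T'': a boundary vertex mapped into T'' would lie in F\<^sup>-\<^sup>1(T'') next to
  an edge of T', hence in T'. So F maps leaves to leaves and internal vertices to internal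
  vertices of the closures, and the cover data at internal vertices restrict unchanged. *)

section \<open>The topology of a tree\<close>

lemma is_graph_edgeE:
  assumes "is_graph V E" "e \<in> E"
  obtains a b where "a \<noteq> b" "a \<in> V" "b \<in> V" "e = {a, b}"
  using assms unfolding is_graph_def by blast

lemma is_graph_edge_subset: "is_graph V E \<Longrightarrow> e \<in> E \<Longrightarrow> e \<subseteq> V"
  by (auto elim: is_graph_edgeE)

lemma is_graph_edge_other_end:
  assumes "is_graph V E" "e \<in> E" "v \<in> e"
  obtains w where "w \<noteq> v" "e = {v, w}"
proof -
  obtain a b where "a \<noteq> b" "e = {a, b}" using assms(1,2) by (rule is_graph_edgeE)
  moreover have "v = a \<or> v = b" using assms(3) \<open>e = {a, b}\<close> by simp
  ultimately show thesis using that[of b] that[of a] by (auto simp: insert_commute)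
qed

lemma tree_points_Inl [simp]: "Inl v \<in> tree_points V E \<longleftrightarrow> v \<in> V"
  and tree_points_Inr [simp]: "Inr e \<in> tree_points V E \<longleftrightarrow> e \<in> E"
  by (auto simp: tree_points_def)

lemma topspace_tree_top: "topspace (tree_top V E) = tree_points V E"
proof (rule subset_antisym)
  show "topspace (tree_top V E) \<subseteq> tree_points V E"
    using openin_topspace openin_tree_top tree_open_def by blast
  show "tree_points V E \<subseteq> topspace (tree_top V E)"
    by (rule openin_subset) (auto simp: openin_tree_top tree_open_def)
qed

text \<open>The smallest open set containing the vertices \<open>R\<close>.\<close>
definition open_star :: "'v set set \<Rightarrow> 'v set \<Rightarrow> ('v + 'v set) set" where
  "open_star E R = Inl ` R \<union> Inr ` {e \<in> E. e \<inter> R \<noteq> {}}"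

lemma tree_open_open_star: "R \<subseteq> V \<Longrightarrow> tree_open V E (open_star E R)"
  unfolding tree_open_def open_star_def tree_points_def by blast

lemma closure_of_tree_top:
  assumes "is_graph V E" "A \<subseteq> tree_points V E"
  shows "tree_top V E closure_of A = A \<union> Inl ` {v. \<exists>e. Inr e \<in> A \<and> v \<in> e}"
proof (intro equalityI subsetI)
  fix p assume p: "p \<in> tree_top V E closure_of A"
  then have pT: "p \<in> tree_points V E"
    using closure_of_subset_topspace topspace_tree_top by fastforce
  show "p \<in> A \<union> Inl ` {v. \<exists>e. Inr e \<in> A \<and> v \<in> e}"
  proof (cases p)
    case (Inl v)
    have "openin (tree_top V E) (open_star E {v})"
      using pT Inl by (simp add: openin_tree_top tree_open_open_star)
    moreover have "p \<in> open_star E {v}"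
      using Inl by (simp add: open_star_def)
    ultimately obtain q where "q \<in> A" "q \<in> open_star E {v}"
      using p unfolding in_closure_of by meson
    then show ?thesis using Inl unfolding open_star_def by auto
  next
    case (Inr e)
    have "openin (tree_top V E) {Inr e}"
      using pT Inr by (simp add: openin_tree_top tree_open_def)
    then show ?thesis using p Inr unfolding in_closure_of by auto
  qed
next
  fix p assume "p \<in> A \<union> Inl ` {v. \<exists>e. Inr e \<in> A \<and> v \<in> e}"
  then consider "p \<in> A" | v e where "p = Inl v" "Inr e \<in> A" "v \<in> e"
    by auto
  then show "p \<in> tree_top V E closure_of A"
  proof cases
    case 1
    then show ?thesis
      using assms(2) closure_of_subset[of A "tree_top V E"] by (auto simp: topspace_tree_top)
  next
    case 2
    then have "e \<in> E" using assms(2) by auto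
    then have "v \<in> V" using 2 assms(1) is_graph_edge_subset by blast
    then show ?thesis using 2 \<open>e \<in> E\<close>
      unfolding in_closure_of topspace_tree_top openin_tree_top tree_open_def by auto
  qed
qed

lemma connectedin_vertex_edge:
  assumes "v \<in> V" "e \<in> E" "v \<in> e"
  shows "connectedin (tree_top V E) {Inl v, Inr e}"
  unfolding connectedin
proof (intro conjI notI)
  show "{Inl v, Inr e} \<subseteq> topspace (tree_top V E)"
    using assms by (simp add: topspace_tree_top)
next
  have edge: "Inr e \<in> U" if "openin (tree_top V E) U" "Inl v \<in> U" for U
    using that assms by (simp add: openin_tree_top tree_open_def)
  assume "\<exists>U W. openin (tree_top V E) U \<and> openin (tree_top V E) W \<and>
    {Inl v, Inr e} \<subseteq> U \<union> W \<and> U \<inter> W \<inter> {Inl v, Inr e} = {} \<and>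
    U \<inter> {Inl v, Inr e} \<noteq> {} \<and> W \<inter> {Inl v, Inr e} \<noteq> {}"
  then obtain U W where "openin (tree_top V E) U" "openin (tree_top V E) W"
    "U \<inter> W \<inter> {Inl v, Inr e} = {}"
    "U \<inter> {Inl v, Inr e} \<noteq> {}" "W \<inter> {Inl v, Inr e} \<noteq> {}"
    by auto
  then have "Inr e \<in> U" "Inr e \<in> W" using edge by auto
  then show False using \<open>U \<inter> W \<inter> {Inl v, Inr e} = {}\<close> by auto
qed

lemma sub_vertices_closure_of_tree_top:
  assumes "is_graph V E" "A \<subseteq> tree_points V E"
  shows "sub_vertices (tree_top V E closure_of A) = {v. Inl v \<in> A} \<union> {v. \<exists>e. Inr e \<in> A \<and> v \<in> e}"
  by (auto simp: closure_of_tree_top[OF assms] sub_vertices_def)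

lemma sub_edges_closure_of_tree_top:
  assumes "is_graph V E" "A \<subseteq> tree_points V E"
  shows "sub_edges (tree_top V E closure_of A) = sub_edges A"
  by (auto simp: closure_of_tree_top[OF assms] sub_edges_def)

lemma sub_vertices_closure_of_tree_top_subset:
  assumes "is_graph V E" "A \<subseteq> tree_points V E"
  shows "sub_vertices (tree_top V E closure_of A) \<subseteq> V"
  using assms is_graph_edge_subset
  by (fastforce simp: sub_vertices_closure_of_tree_top[OF assms])

lemma open_star_meets_closure_vertex:
  assumes "is_graph V E" "A \<subseteq> tree_points V E"
    and "z \<in> sub_vertices (tree_top V E closure_of A)" "z \<in> R"
  shows "open_star E R \<inter> A \<noteq> {}"
proof -
  consider "Inl z \<in> A" | e where "Inr e \<in> A" "z \<in> e"
    using assms(3) by (auto simp: sub_vertices_closure_of_tree_top[OF assms(1,2)])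
  then show ?thesis
  proof cases
    case 1
    then have "Inl z \<in> open_star E R" using assms(4) by (simp add: open_star_def)
    then show ?thesis using 1 by blast
  next
    case 2
    then have "e \<in> E" using assms(2) by auto
    then have "Inr e \<in> open_star E R" using 2 assms(4) by (auto simp: open_star_def)
    then show ?thesis using 2 by blast
  qed
qed

section \<open>Open connected subsets and their closures\<close>

text \<open>Since \<open>R\<close> is closed under the edges of \<open>A\<close> that avoid \<open>Q\<close>, the open stars of \<open>R\<close> and
  of \<open>V - R - Q\<close> cover \<open>A\<close> without overlapping on it.\<close>
lemma connectedin_tree_top_separation:
  assumes G: "is_graph V E" and A: "A \<subseteq> tree_points V E" "connectedin (tree_top V E) A"
    and Q_vertices: "\<And>q. q \<in> Q \<Longrightarrow> Inl q \<notin> A"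
    and Q_edges: "\<And>e. Inr e \<in> A \<Longrightarrow> \<not> e \<subseteq> Q"
    and R: "R \<subseteq> V - Q" "\<And>x y. {x, y} \<in> sub_edges A \<Longrightarrow> x \<in> R \<Longrightarrow> y \<notin> Q \<Longrightarrow> y \<in> R"
    and meets: "open_star E R \<inter> A \<noteq> {}"
  shows "open_star E (V - R - Q) \<inter> A = {}"
proof -
  let ?U = "open_star E R" and ?W = "open_star E (V - R - Q)"
  have opens: "openin (tree_top V E) ?U" "openin (tree_top V E) ?W"
    using R(1) by (auto simp: openin_tree_top intro: tree_open_open_star)
  have "A \<subseteq> ?U \<union> ?W"
  proof
    fix p assume p: "p \<in> A"
    show "p \<in> ?U \<union> ?W"
    proof (cases p)
      case (Inl b)
      then have "b \<in> V" "b \<notin> Q" using p A(1) Q_vertices by auto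
      then show ?thesis using Inl by (auto simp: open_star_def)
    next
      case (Inr e)
      then have "e \<in> E" using p A(1) by auto
      moreover obtain z where "z \<in> e" "z \<notin> Q" using Q_edges p Inr by blast
      moreover have "z \<in> V" using is_graph_edge_subset[OF G \<open>e \<in> E\<close>] \<open>z \<in> e\<close> by blast
      ultimately have "e \<in> {e \<in> E. e \<inter> R \<noteq> {}} \<union> {e \<in> E. e \<inter> (V - R - Q) \<noteq> {}}"
        by blast
      then show ?thesis unfolding Inr open_star_def by blast
    qed
  qed
  moreover have "?U \<inter> ?W \<inter> A = {}"
  proof (rule equals0I)
    fix p assume p: "p \<in> ?U \<inter> ?W \<inter> A"
    then obtain e y z where e: "p = Inr e" "e \<in> E" "y \<in> e" "y \<in> R" "z \<in> e" "z \<in> V - R - Q"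
      by (auto simp: open_star_def)
    have "y \<noteq> z" using e by blast
    with G e(2,3,5) have "e = {y, z}"
      by (metis is_graph_edge_other_end insertE singletonD)
    then have "z \<in> R" using R(2)[of y z] p e by (auto simp: sub_edges_def)
    then show False using e by blast
  qed
  ultimately show ?thesis
    using connectedinD[OF A(2) opens] meets by blast
qed

lemma connectedin_tree_top_reachable:
  assumes G: "is_graph V E" and A: "A \<subseteq> tree_points V E" "connectedin (tree_top V E) A"
    and Q_vertices: "\<And>q. q \<in> Q \<Longrightarrow> Inl q \<notin> A"
    and Q_edges: "\<And>e. Inr e \<in> A \<Longrightarrow> \<not> e \<subseteq> Q"
    and a: "a \<in> sub_vertices (tree_top V E closure_of A) - Q"
    and b: "b \<in> sub_vertices (tree_top V E closure_of A) - Q"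
  shows "(\<lambda>x y. {x, y} \<in> sub_edges A \<and> y \<notin> Q)\<^sup>*\<^sup>* a b"
proof (rule ccontr)
  let ?step = "\<lambda>x y. {x, y} \<in> sub_edges A \<and> y \<notin> Q"
  define R where "R = {z. ?step\<^sup>*\<^sup>* a z}"
  have "a \<in> V" using a sub_vertices_closure_of_tree_top_subset[OF G A(1)] by blast
  have R_sub: "R \<subseteq> V - Q"
  proof
    fix z assume "z \<in> R"
    then have "?step\<^sup>*\<^sup>* a z" by (simp add: R_def)
    then show "z \<in> V - Q"
    proof (induction rule: rtranclp_induct)
      case (step y z)
      then have "{y, z} \<in> E" using A(1) by (auto simp: sub_edges_def)
      then show ?case using step is_graph_edge_subset[OF G] by blast
    qed (use a \<open>a \<in> V\<close> in blast)
  qed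
  have R_closed: "y \<in> R" if "{x, y} \<in> sub_edges A" "x \<in> R" "y \<notin> Q" for x y
    using that by (auto simp: R_def intro: rtranclp.rtrancl_into_rtrancl)
  have "open_star E R \<inter> A \<noteq> {}"
    by (rule open_star_meets_closure_vertex[OF G A(1)]) (use a in \<open>auto simp: R_def\<close>)
  with G A Q_vertices Q_edges R_sub R_closed
  have W_misses: "open_star E (V - R - Q) \<inter> A = {}"
    by (rule connectedin_tree_top_separation)
  assume "\<not> ?step\<^sup>*\<^sup>* a b"
  then have "b \<in> V - R - Q"
    using b sub_vertices_closure_of_tree_top_subset[OF G A(1)] by (auto simp: R_def)
  then have "open_star E (V - R - Q) \<inter> A \<noteq> {}"
    using b by (intro open_star_meets_closure_vertex[OF G A(1)]) auto
  then show False using W_misses by simp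
qed

lemma is_cycle_rtrancl_path:
  assumes path: "rtrancl_path (\<lambda>x y. {x, y} \<in> E) x xs y"
    and "distinct (v # x # xs)" "xs \<noteq> []" "{v, x} \<in> E" "{y, v} \<in> E"
  shows "is_cycle E (v # x # xs)"
  unfolding is_cycle_def
proof (intro conjI allI impI)
  fix k assume k: "Suc k < length (v # x # xs)"
  show "{(v # x # xs) ! k, (v # x # xs) ! Suc k} \<in> E"
  proof (cases k)
    case (Suc j)
    then show ?thesis using rtrancl_path_nth[OF path, of j] k by simp
  qed (use assms in simp)
qed (use assms rtrancl_path_last[OF path] in \<open>auto simp: Suc_le_eq\<close>)

lemma is_tree_neighbours_not_reachable_avoiding:
  assumes T: "is_tree V E" and E: "{v, x1} \<in> E" "{v, x2} \<in> E" and "x1 \<noteq> x2"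
  shows "\<not> (\<lambda>x y. {x, y} \<in> E \<and> y \<noteq> v)\<^sup>*\<^sup>* x1 x2"
proof
  have G: "is_graph V E" using T by (simp add: is_tree_def)
  have "x1 \<noteq> v" using G E(1) by (auto elim!: is_graph_edgeE simp: doubleton_eq_iff)
  assume "(\<lambda>x y. {x, y} \<in> E \<and> y \<noteq> v)\<^sup>*\<^sup>* x1 x2"
  then obtain ys where "rtrancl_path (\<lambda>x y. {x, y} \<in> E \<and> y \<noteq> v) x1 ys x2"
    by (auto simp: rtranclp_eq_rtrancl_path)
  then obtain xs where path: "rtrancl_path (\<lambda>x y. {x, y} \<in> E \<and> y \<noteq> v) x1 xs x2"
    and "distinct (x1 # xs)"
    by (rule rtrancl_path_distinct)
  have "v \<notin> set xs" using rtrancl_path_Range[OF path] by blast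
  have "xs \<noteq> []" using path \<open>x1 \<noteq> x2\<close> by (auto elim: rtrancl_path.cases)
  have edge_path: "rtrancl_path (\<lambda>x y. {x, y} \<in> E) x1 xs x2"
    using path by (rule rtrancl_path_mono) simp
  have "is_cycle E (v # x1 # xs)"
    using \<open>distinct (x1 # xs)\<close> \<open>v \<notin> set xs\<close> \<open>x1 \<noteq> v\<close> \<open>xs \<noteq> []\<close> E
    by (intro is_cycle_rtrancl_path[OF edge_path]) (auto simp: insert_commute)
  moreover have "set (v # x1 # xs) \<subseteq> V"
    using rtrancl_path_Range[OF edge_path] is_graph_edge_subset[OF G] E(1) by fastforce
  ultimately show False using T by (auto simp: is_tree_def)
qed

lemma connectedin_tree_top_boundary_edge_unique:
  assumes T: "is_tree V E" and A: "A \<subseteq> tree_points V E" "connectedin (tree_top V E) A"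
    and v: "Inl v \<notin> A" and e1: "Inr e1 \<in> A" "v \<in> e1" and e2: "Inr e2 \<in> A" "v \<in> e2"
  shows "e1 = e2"
proof (rule ccontr)
  assume "e1 \<noteq> e2"
  have G: "is_graph V E" using T by (simp add: is_tree_def)
  have "e1 \<in> E" "e2 \<in> E" using A(1) e1 e2 by auto
  obtain x1 where x1: "x1 \<noteq> v" "e1 = {v, x1}"
    using G \<open>e1 \<in> E\<close> e1(2) by (rule is_graph_edge_other_end)
  obtain x2 where x2: "x2 \<noteq> v" "e2 = {v, x2}"
    using G \<open>e2 \<in> E\<close> e2(2) by (rule is_graph_edge_other_end)
  have closure_vertex: "x \<in> sub_vertices (tree_top V E closure_of A)" if "Inr {v, x} \<in> A" for x
    using that by (auto simp: sub_vertices_closure_of_tree_top[OF G A(1)])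
  have no_loop: "\<not> e \<subseteq> {v}" if "Inr e \<in> A" for e
    using that A(1) G by (auto elim!: is_graph_edgeE)
  have "(\<lambda>x y. {x, y} \<in> sub_edges A \<and> y \<notin> {v})\<^sup>*\<^sup>* x1 x2"
    by (rule connectedin_tree_top_reachable[OF G A _ no_loop])
      (use v e1 e2 x1 x2 closure_vertex in auto)
  moreover have "(\<lambda>x y. {x, y} \<in> sub_edges A \<and> y \<notin> {v}) \<le> (\<lambda>x y. {x, y} \<in> E \<and> y \<noteq> v)"
    using A(1) by (auto simp: sub_edges_def)
  ultimately have "(\<lambda>x y. {x, y} \<in> E \<and> y \<noteq> v)\<^sup>*\<^sup>* x1 x2"
    using rtranclp_mono by (blast dest: predicate2D)
  moreover have "x1 \<noteq> x2" using \<open>e1 \<noteq> e2\<close> x1 x2 by blast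
  ultimately show False
    using is_tree_neighbours_not_reachable_avoiding[OF T] \<open>e1 \<in> E\<close> \<open>e2 \<in> E\<close> x1 x2 by blast
qed

lemma is_cycle_mono: "is_cycle E' vs \<Longrightarrow> E' \<subseteq> E \<Longrightarrow> is_cycle E vs"
  unfolding is_cycle_def by blast

locale tree_open_connected =
  fixes V :: "'v set" and E :: "'v set set" and A :: "('v + 'v set) set"
  assumes tree: "is_tree V E" and open_A: "tree_open V E A"
    and connected: "connectedin (tree_top V E) A" and nonempty: "A \<noteq> {}"
begin

abbreviation closure_vertices :: "'v set" where
  "closure_vertices \<equiv> sub_vertices (tree_top V E closure_of A)"

abbreviation closure_edges :: "'v set set" where
  "closure_edges \<equiv> sub_edges (tree_top V E closure_of A)"

lemma graph: "is_graph V E"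
  using tree by (simp add: is_tree_def)

lemma subset_points: "A \<subseteq> tree_points V E"
  using open_A by (simp add: tree_open_def)

lemma closure_vertices_iff:
  "v \<in> closure_vertices \<longleftrightarrow> Inl v \<in> A \<or> (\<exists>e. Inr e \<in> A \<and> v \<in> e)"
  by (simp add: sub_vertices_closure_of_tree_top[OF graph subset_points])

lemma closure_edges_eq: "closure_edges = sub_edges A"
  by (rule sub_edges_closure_of_tree_top[OF graph subset_points])

lemma closure_edges_iff: "e \<in> closure_edges \<longleftrightarrow> Inr e \<in> A"
  unfolding closure_edges_eq by (simp add: sub_edges_def)

lemma closure_vertices_subset: "closure_vertices \<subseteq> V"
  by (rule sub_vertices_closure_of_tree_top_subset[OF graph subset_points])

lemma closure_edges_subset: "closure_edges \<subseteq> E"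
  using subset_points by (auto simp: closure_edges_iff)

lemma edges_at_closure_interior:
  assumes "Inl v \<in> A"
  shows "edges_at closure_edges v = edges_at E v"
  using assms open_A subset_points
  by (auto simp: closure_edges_iff edges_at_def tree_open_def)

lemma edges_at_closure_boundary:
  assumes "v \<in> closure_vertices" "Inl v \<notin> A"
  shows "card (edges_at closure_edges v) = 1"
proof -
  obtain e where e: "Inr e \<in> A" "v \<in> e"
    using assms by (auto simp: closure_vertices_iff)
  have "edges_at closure_edges v = {e}"
  proof (intro equalityI subsetI)
    fix e' assume "e' \<in> edges_at closure_edges v"
    then have "Inr e' \<in> A" "v \<in> e'" by (simp_all add: edges_at_def closure_edges_iff)
    then show "e' \<in> {e}"
      using connectedin_tree_top_boundary_edge_unique[OF tree subset_points connected assms(2) e]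
      by simp
  qed (use e in \<open>simp add: edges_at_def closure_edges_iff\<close>)
  then show ?thesis by simp
qed

lemma internal_vertices_closure_iff:
  "v \<in> internal_vertices closure_vertices closure_edges \<longleftrightarrow>
     Inl v \<in> A \<and> v \<in> internal_vertices V E"
proof (cases "Inl v \<in> A")
  case True
  then have "v \<in> closure_vertices" "v \<in> V"
    using subset_points by (auto simp: closure_vertices_iff)
  then show ?thesis
    using True by (simp add: internal_vertices_def edges_at_closure_interior)
next
  case False
  then show ?thesis
    using edges_at_closure_boundary by (auto simp: internal_vertices_def)
qed

lemma leaves_closure_iff:
  "v \<in> leaves closure_vertices closure_edges \<longleftrightarrow>
     (v \<in> closure_vertices \<and> Inl v \<notin> A) \<or> (Inl v \<in> A \<and> v \<in> leaves V E)"
proof (cases "Inl v \<in> A")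
  case True
  then have "v \<in> closure_vertices" "v \<in> V"
    using subset_points by (auto simp: closure_vertices_iff)
  then show ?thesis
    using True by (simp add: leaves_def edges_at_closure_interior)
next
  case False
  then show ?thesis
    using edges_at_closure_boundary by (auto simp: leaves_def)
qed

lemma edge_doubleton:
  assumes "Inr e \<in> A"
  obtains a b where "a \<noteq> b" "e = {a, b}" "a \<in> closure_vertices" "b \<in> closure_vertices"
proof -
  have "e \<in> E" using assms subset_points by auto
  with graph obtain a b where "a \<noteq> b" "e = {a, b}" by (rule is_graph_edgeE)
  moreover have "a \<in> closure_vertices" "b \<in> closure_vertices"
    using assms \<open>e = {a, b}\<close> by (auto simp: closure_vertices_iff)
  ultimately show thesis by (rule that)
qed

lemma closure_vertices_nonempty: "closure_vertices \<noteq> {}"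
proof -
  obtain p where p: "p \<in> A" using nonempty by blast
  show ?thesis
  proof (cases p)
    case (Inl v)
    then show ?thesis using p by (auto simp: closure_vertices_iff)
  next
    case (Inr e)
    then show ?thesis using p by (metis edge_doubleton empty_iff)
  qed
qed

lemma is_graph_closure: "is_graph closure_vertices closure_edges"
  unfolding is_graph_def
proof
  fix e assume "e \<in> closure_edges"
  then obtain a b where "a \<noteq> b" "e = {a, b}" "a \<in> closure_vertices" "b \<in> closure_vertices"
    by (auto simp: closure_edges_iff elim: edge_doubleton)
  then show "\<exists>a b. a \<noteq> b \<and> a \<in> closure_vertices \<and> b \<in> closure_vertices \<and> e = {a, b}"
    by blast
qed

lemma graph_connected_closure: "graph_connected closure_vertices closure_edges"
  unfolding graph_connected_def
proof (intro ballI)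
  fix a b assume "a \<in> closure_vertices" "b \<in> closure_vertices"
  moreover have "\<not> e \<subseteq> {}" if "Inr e \<in> A" for e
    using that by (auto elim: edge_doubleton)
  ultimately have "(\<lambda>x y. {x, y} \<in> sub_edges A \<and> y \<notin> {})\<^sup>*\<^sup>* a b"
    by (intro connectedin_tree_top_reachable[OF graph subset_points connected]) auto
  then show "(\<lambda>x y. {x, y} \<in> closure_edges)\<^sup>*\<^sup>* a b"
    by (simp add: closure_edges_eq)
qed

lemma is_tree_closure: "is_tree closure_vertices closure_edges"
proof -
  have "finite closure_vertices"
    using closure_vertices_subset tree finite_subset by (auto simp: is_tree_def)
  moreover have "\<not> (\<exists>vs. set vs \<subseteq> closure_vertices \<and> is_cycle closure_edges vs)"
    using tree closure_vertices_subset closure_edges_subset is_cycle_mono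
    by (meson is_tree_def order_trans)
  ultimately show ?thesis
    using closure_vertices_nonempty is_graph_closure graph_connected_closure
    by (simp add: is_tree_def)
qed

lemma tree_of_spheres_data_closure:
  assumes "tree_of_spheres_data V E S i"
  shows "tree_of_spheres_data closure_vertices closure_edges S i"
  unfolding tree_of_spheres_data_def
proof (intro conjI ballI)
  fix v assume "v \<in> internal_vertices closure_vertices closure_edges"
  then have "Inl v \<in> A" "v \<in> internal_vertices V E"
    by (simp_all add: internal_vertices_closure_iff)
  then show "S v homeomorphic sphere (0::real^3) 1"
    "inj_on (i v) (edges_at closure_edges v)" "i v ` edges_at closure_edges v \<subseteq> S v"
    using assms by (simp_all add: tree_of_spheres_data_def edges_at_closure_interior)
qed (rule is_tree_closure)

end

section \<open>Restricting a cover\<close>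

lemma tree_open_preimage:
  assumes "\<And>e. e \<in> E \<Longrightarrow> F ` e \<in> E'" "tree_open V' E' U"
  shows "tree_open V E {p \<in> tree_points V E. tree_map F p \<in> U}"
  unfolding tree_open_def
proof (intro conjI allI impI)
  fix v e assume v: "Inl v \<in> {p \<in> tree_points V E. tree_map F p \<in> U}" and "e \<in> E" "v \<in> e"
  then have "Inl (F v) \<in> U" "F ` e \<in> E'" "F v \<in> F ` e"
    using assms(1) by (auto simp: tree_map_def)
  then have "Inr (F ` e) \<in> U" using assms(2) by (simp add: tree_open_def)
  then show "Inr e \<in> {p \<in> tree_points V E. tree_map F p \<in> U}"
    using \<open>e \<in> E\<close> by (simp add: tree_map_def)
qed blast

lemma connected_component_tree_top_incident:
  assumes C: "C \<in> connected_components_of (subtopology (tree_top V E) P)"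
    and "v \<in> V" "e \<in> E" "v \<in> e" "Inl v \<in> P" "Inr e \<in> P"
    and "Inl v \<in> C \<or> Inr e \<in> C"
  shows "Inl v \<in> C \<and> Inr e \<in> C"
proof -
  have "connectedin (subtopology (tree_top V E) P) {Inl v, Inr e}"
    using connectedin_vertex_edge[OF assms(2-4)] assms(5,6) by (simp add: connectedin_subtopology)
  moreover have "\<not> disjnt C {Inl v, Inr e}" using assms(7) by (auto simp: disjnt_def)
  ultimately have "{Inl v, Inr e} \<subseteq> C" by (rule connected_components_of_maximal[OF C])
  then show ?thesis by simp
qed

lemma tree_open_connected_component:
  assumes P: "tree_open V E P" and C: "C \<in> connected_components_of (subtopology (tree_top V E) P)"
  shows "tree_open V E C"
proof -
  have "C \<subseteq> P" "P \<subseteq> tree_points V E"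
    using connected_components_of_subset[OF C] P by (auto simp: tree_open_def)
  moreover have "Inr e \<in> C" if "Inl v \<in> C" "e \<in> E" "v \<in> e" for v e
  proof -
    have "Inl v \<in> P" "v \<in> V" using that \<open>C \<subseteq> P\<close> \<open>P \<subseteq> tree_points V E\<close> by auto
    moreover have "Inr e \<in> P" using P that \<open>Inl v \<in> P\<close> by (simp add: tree_open_def)
    ultimately show ?thesis
      using connected_component_tree_top_incident[OF C] that by blast
  qed
  ultimately show ?thesis unfolding tree_open_def by blast
qed

lemma tos_cover_image_edge:
  assumes "is_graph VY EY" "tos_cover VY EY SY iY VZ EZ SZ iZ F f" "e \<in> EY"
  shows "F ` e \<in> EZ"
proof -
  obtain a b where "e = {a, b}" using assms(1,3) by (rule is_graph_edgeE)
  then show ?thesis using assms(2,3) by (simp add: tos_cover_def)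
qed

locale tos_cover_restriction =
  Y: tree_open_connected VY EY A + Z: tree_open_connected VZ EZ B
  for VY :: "'v set" and EY A and VZ :: "'w set" and EZ B +
  fixes SY :: "'v \<Rightarrow> 'a::topological_space set" and iY :: "'v \<Rightarrow> 'v set \<Rightarrow> 'a"
    and SZ :: "'w \<Rightarrow> 'b::topological_space set" and iZ :: "'w \<Rightarrow> 'w set \<Rightarrow> 'b"
    and F :: "'v \<Rightarrow> 'w" and f :: "'v \<Rightarrow> 'a \<Rightarrow> 'b"
  assumes cover: "tos_cover VY EY SY iY VZ EZ SZ iZ F f"
    and maps: "\<And>p. p \<in> A \<Longrightarrow> tree_map F p \<in> B"
    and boundary: "\<And>v. v \<in> Y.closure_vertices \<Longrightarrow> Inl v \<notin> A \<Longrightarrow> Inl (F v) \<notin> B"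
begin

lemma maps_vertex: "Inl v \<in> A \<Longrightarrow> Inl (F v) \<in> B"
  using maps[of "Inl v"] by (simp add: tree_map_def)

lemma maps_edge: "Inr e \<in> A \<Longrightarrow> Inr (F ` e) \<in> B"
  using maps[of "Inr e"] by (simp add: tree_map_def)

lemma image_closure_vertices: "F ` Y.closure_vertices \<subseteq> Z.closure_vertices"
proof
  fix w assume "w \<in> F ` Y.closure_vertices"
  then obtain v where "w = F v" "Inl v \<in> A \<or> (\<exists>e. Inr e \<in> A \<and> v \<in> e)"
    by (auto simp: Y.closure_vertices_iff)
  then show "w \<in> Z.closure_vertices"
    using maps_vertex maps_edge by (auto simp: Z.closure_vertices_iff)
qed

lemma image_closure_edge: "{v, w} \<in> Y.closure_edges \<Longrightarrow> {F v, F w} \<in> Z.closure_edges"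
  using maps_edge[of "{v, w}"] by (simp add: Y.closure_edges_iff Z.closure_edges_iff)

lemma image_leaves_closure:
  "F ` leaves Y.closure_vertices Y.closure_edges \<subseteq> leaves Z.closure_vertices Z.closure_edges"
proof
  fix w assume "w \<in> F ` leaves Y.closure_vertices Y.closure_edges"
  then obtain v where w: "w = F v" and
    "(v \<in> Y.closure_vertices \<and> Inl v \<notin> A) \<or> (Inl v \<in> A \<and> v \<in> leaves VY EY)"
    by (auto simp: Y.leaves_closure_iff)
  then consider "v \<in> Y.closure_vertices" "Inl v \<notin> A" | "Inl v \<in> A" "v \<in> leaves VY EY"
    by blast
  then show "w \<in> leaves Z.closure_vertices Z.closure_edges"
  proof cases
    case 1
    then show ?thesis
      using image_closure_vertices boundary w by (auto simp: Z.leaves_closure_iff)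
  next
    case 2
    then have "F v \<in> leaves VZ EZ" using cover by (auto simp: tos_cover_def)
    then show ?thesis using maps_vertex 2 w by (simp add: Z.leaves_closure_iff)
  qed
qed

lemma image_internal_vertices_closure:
  "F ` internal_vertices Y.closure_vertices Y.closure_edges
     \<subseteq> internal_vertices Z.closure_vertices Z.closure_edges"
proof -
  have "F ` internal_vertices VY EY \<subseteq> internal_vertices VZ EZ"
    using cover by (simp add: tos_cover_def)
  then show ?thesis
    using maps_vertex
    by (fastforce simp: Y.internal_vertices_closure_iff Z.internal_vertices_closure_iff)
qed

lemma local_covers_closure:
  assumes "v \<in> internal_vertices Y.closure_vertices Y.closure_edges"
  shows "branched_covering (f v) (SY v) (SZ (F v)) \<and>
    covering_space (SY v - marked_points Y.closure_edges iY v) (f v)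
      (SZ (F v) - marked_points Z.closure_edges iZ (F v)) \<and>
    (\<forall>e\<in>edges_at Y.closure_edges v. f v (iY v e) = iZ (F v) (F ` e))"
proof -
  have "Inl v \<in> A" "v \<in> internal_vertices VY EY"
    using assms by (simp_all add: Y.internal_vertices_closure_iff)
  moreover have "Inl (F v) \<in> B" using maps_vertex \<open>Inl v \<in> A\<close> .
  ultimately show ?thesis
    using cover by (simp add: tos_cover_def marked_points_def Y.edges_at_closure_interior
        Z.edges_at_closure_interior)
qed

lemma local_deg_closure:
  assumes "{v1, v2} \<in> Y.closure_edges"
    and "v1 \<in> internal_vertices Y.closure_vertices Y.closure_edges"
    and "v2 \<in> internal_vertices Y.closure_vertices Y.closure_edges"
  shows "local_deg (f v1) (SY v1) (SZ (F v1)) (iY v1 {v1, v2}) =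
    local_deg (f v2) (SY v2) (SZ (F v2)) (iY v2 {v1, v2})"
proof -
  have "{v1, v2} \<in> EY" using assms(1) Y.closure_edges_subset by blast
  moreover have "v1 \<in> internal_vertices VY EY" "v2 \<in> internal_vertices VY EY"
    using assms(2,3) by (simp_all add: Y.internal_vertices_closure_iff)
  ultimately show ?thesis using cover unfolding tos_cover_def by blast
qed

lemma tos_cover_closure:
  "tos_cover Y.closure_vertices Y.closure_edges SY iY Z.closure_vertices Z.closure_edges SZ iZ F f"
  unfolding tos_cover_def
  using image_closure_vertices image_closure_edge image_leaves_closure
    image_internal_vertices_closure local_covers_closure local_deg_closure
  by blast

end

lemma tree_open_connected_component_of_open:
  assumes "is_tree V E" "tree_open V E P"
    and C: "C \<in> connected_components_of (subtopology (tree_top V E) P)"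
  shows "tree_open_connected V E C"
proof
  show "tree_open V E C" using assms(2) C by (rule tree_open_connected_component)
  show "connectedin (tree_top V E) C"
    using connectedin_connected_components_of[OF C] by (simp add: connectedin_subtopology)
qed (use assms nonempty_connected_components_of in auto)

lemma connected_component_preimage_boundary:
  assumes G: "is_graph V E"
    and C: "C \<in> connected_components_of
      (subtopology (tree_top V E) {p \<in> tree_points V E. tree_map F p \<in> U})"
    and v: "v \<in> sub_vertices (tree_top V E closure_of C)" "Inl v \<notin> C"
  shows "Inl (F v) \<notin> U"
proof
  assume "Inl (F v) \<in> U"
  have C_sub: "C \<subseteq> {p \<in> tree_points V E. tree_map F p \<in> U}"
    using connected_components_of_subset[OF C] by simp
  then have C_points: "C \<subseteq> tree_points V E" by blast
  obtain e where e: "Inr e \<in> C" "v \<in> e"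
    using v by (auto simp: sub_vertices_closure_of_tree_top[OF G C_points])
  have "e \<in> E" using e(1) C_points by auto
  then have "v \<in> V" using e(2) is_graph_edge_subset[OF G] by blast
  have "Inr e \<in> {p \<in> tree_points V E. tree_map F p \<in> U}" using e(1) C_sub by blast
  moreover have "Inl v \<in> {p \<in> tree_points V E. tree_map F p \<in> U}"
    using \<open>v \<in> V\<close> \<open>Inl (F v) \<in> U\<close> by (simp add: tree_map_def)
  ultimately have "Inl v \<in> C"
    using connected_component_tree_top_incident[OF C \<open>v \<in> V\<close> \<open>e \<in> E\<close> e(2)] e(1) by blast
  then show False using v(2) by contradiction
qed

theorem lemma2p25:
  fixes VY :: "'v set" and EY :: "'v set set"
    and SY :: "'v \<Rightarrow> 'a::topological_space set" and iY :: "'v \<Rightarrow> 'v set \<Rightarrow> 'a"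
    and VZ :: "'w set" and EZ :: "'w set set"
    and SZ :: "'w \<Rightarrow> 'b::topological_space set" and iZ :: "'w \<Rightarrow> 'w set \<Rightarrow> 'b"
    and F :: "'v \<Rightarrow> 'w" and f :: "'v \<Rightarrow> 'a \<Rightarrow> 'b"
    and T2 :: "('w + 'w set) set" and T1 :: "('v + 'v set) set"
  assumes "tree_of_spheres VY EY SY iY"
    and "tree_of_spheres VZ EZ SZ iZ"
    and "tos_cover VY EY SY iY VZ EZ SZ iZ F f"
    and "T2 \<noteq> {}"
    and "openin (tree_top VZ EZ) T2"
    and "connectedin (tree_top VZ EZ) T2"
    and "T1 \<in> connected_components_of
               (subtopology (tree_top VY EY) {p \<in> tree_points VY EY. tree_map F p \<in> T2})"
  shows "tree_of_spheres_data (sub_vertices (tree_top VY EY closure_of T1))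
            (sub_edges (tree_top VY EY closure_of T1)) SY iY
     \<and> tree_of_spheres_data (sub_vertices (tree_top VZ EZ closure_of T2))
            (sub_edges (tree_top VZ EZ closure_of T2)) SZ iZ
     \<and> tos_cover (sub_vertices (tree_top VY EY closure_of T1))
            (sub_edges (tree_top VY EY closure_of T1)) SY iY
          (sub_vertices (tree_top VZ EZ closure_of T2))
            (sub_edges (tree_top VZ EZ closure_of T2)) SZ iZ F f"
proof -
  have data_Y: "tree_of_spheres_data VY EY SY iY" and data_Z: "tree_of_spheres_data VZ EZ SZ iZ"
    using assms(1,2) by (simp_all add: tree_of_spheres_def)
  then have tree_Y: "is_tree VY EY" and tree_Z: "is_tree VZ EZ"
    by (simp_all add: tree_of_spheres_data_def)
  have graph_Y: "is_graph VY EY" using tree_Y by (simp add: is_tree_def)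
  have T2: "tree_open_connected VZ EZ T2"
    using tree_Z assms(4-6) by unfold_locales (simp_all add: openin_tree_top)
  have "tree_open VY EY {p \<in> tree_points VY EY. tree_map F p \<in> T2}"
    using tos_cover_image_edge[OF graph_Y assms(3)] assms(5)
    by (intro tree_open_preimage) (auto simp: openin_tree_top)
  with tree_Y have T1: "tree_open_connected VY EY T1"
    using assms(7) by (rule tree_open_connected_component_of_open)
  have maps: "tree_map F p \<in> T2" if "p \<in> T1" for p
    using that connected_components_of_subset[OF assms(7)] by auto
  have "tos_cover_restriction VY EY T1 VZ EZ T2 SY iY SZ iZ F f"
    using T1 T2 assms(3) maps connected_component_preimage_boundary[OF graph_Y assms(7)]
    by (intro tos_cover_restriction.intro tos_cover_restriction_axioms.intro)
  then show ?thesis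
    using tree_open_connected.tree_of_spheres_data_closure[OF T1 data_Y]
      tree_open_connected.tree_of_spheres_data_closure[OF T2 data_Z]
      tos_cover_restriction.tos_cover_closure
    by blast
qed

end
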